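(* For any $\theta=(B,\Omega)$ and $\psi_i=(m_i,s_i)$, with $\Sigma=\Omega^{-1}$, $\big[\nabla_{\mathrm{vec}(B)\mathrm{vec}(B)}J_i-\nabla_{\mathrm{vec}(B)\psi_i}J_i(\nabla_{\psi_i\psi_i}J_i)^{-1}\nabla_{\psi_i\mathrm{vec}(B)}J_i\big](\theta,\psi_i)=-\Big(\Sigma+D_{\tilde a_i}^{-1}+D_{s_i}^4\big(I_p+D_{s_i}^2(D_{\tilde a_i}+\Omega_D)\big)^{-1}\Big)^{-1}\otimes(x_ix_i^\top)$.
   Context: PLN model, observation $i$ with counts $Y_i\in\mathbb N^p$, covariate $x_i\in\mathbb R^m$, offset $o_i\in\mathbb R^p$; $B\in\mathcal M_{m,p}(\mathbb R)$ (columns $B_j$), $\Omega$ symmetric positive definite. Variational parameter $\psi_i=(m_i,s_i)\in\mathbb R^p\times(0,\infty)^p$. Single-observation ELBO: $J_i(\theta,\psi_i)=Y_i^\top(o_i+m_i+B^\top x_i)-\tilde a_i^\top1_p-\sum_j\log(Y_{ij}!)+\frac12\log|\Omega|-\frac12m_i^\top\Omega m_i-\frac12\mathrm{diag}(\Omega)^\top s_i^2+\sum_j\log s_{ij}+\frac p2$, $\tilde a_{ij}=\exp(o_{ij}+x_i^\top B_j+m_{ij}+s_{ij}^2/2)$. $\mathrm{vec}(B)$ stacks the columns of $B$. Notation: $D_v=\mathrm{Diag}(v)$, $\Omega_D=I_p\odot\Omega$ (diagonal part of $\Omega$), $\otimes$ Kronecker product. *)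

theory Defs
  imports "HOL-Analysis.Analysis"
begin

definition Diag :: "real^'n \<Rightarrow> real^'n^'n" where
  "Diag v = (\<chi> i j. if i = j then v $ i else 0)"

definition diag_part :: "real^'n^'n \<Rightarrow> real^'n^'n" where
  "diag_part A = (\<chi> i j. if i = j then A $ i $ j else 0)"

text \<open>Kronecker product A (x) C, rows/columns indexed by pairs (j,k), j the outer (block) index.
  With vec(B) indexed by (j,k) ~ B_{kj} (columns stacked), this is the usual Kronecker product.\<close>
definition kron :: "real^'a^'a \<Rightarrow> real^'b^'b \<Rightarrow> real^('a \<times> 'b)^('a \<times> 'b)" where
  "kron A C = (\<chi> u v. A $ fst u $ fst v * C $ snd u $ snd v)"

definition partial :: "(real^'n \<Rightarrow> real) \<Rightarrow> 'n \<Rightarrow> real^'n \<Rightarrow> real" where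
  "partial f i x = deriv (\<lambda>t. f (x + t *\<^sub>R axis i 1)) 0"

definition hessian :: "(real^'n \<Rightarrow> real) \<Rightarrow> real^'n \<Rightarrow> real^'n^'n" where
  "hessian f x = (\<chi> i j. partial (partial f j) i x)"

definition atil :: "real^'m \<Rightarrow> real^'p \<Rightarrow> real^'p^'m \<Rightarrow> real^'p \<Rightarrow> real^'p \<Rightarrow> real^'p" where
  "atil x off B mu s = (\<chi> j. exp (off $ j + (\<Sum>k\<in>UNIV. x $ k * B $ k $ j) + mu $ j + (s $ j)^2 / 2))"

definition elbo :: "nat^'p \<Rightarrow> real^'m \<Rightarrow> real^'p \<Rightarrow> real^'p^'m \<Rightarrow> real^'p^'p \<Rightarrow> real^'p \<Rightarrow> real^'p \<Rightarrow> real" where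
  "elbo Y x off B Om mu s =
     (\<Sum>j\<in>UNIV. real (Y $ j) * (off $ j + mu $ j + (\<Sum>k\<in>UNIV. x $ k * B $ k $ j)))
     - (\<Sum>j\<in>UNIV. atil x off B mu s $ j)
     - (\<Sum>j\<in>UNIV. ln (fact (Y $ j)))
     + ln (det Om) / 2
     - (mu \<bullet> (Om *v mu)) / 2
     - (\<Sum>j\<in>UNIV. Om $ j $ j * (s $ j)^2) / 2
     + (\<Sum>j\<in>UNIV. ln (s $ j))
     + real CARD('p) / 2"

text \<open>Joint variable z = (vec(B), (m_i, s_i)): z $ Inl (j,k) = B_{kj},
  z $ Inr (Inl j) = m_ij, z $ Inr (Inr j) = s_ij.\<close>
definition unB :: "real^(('p::finite \<times> 'm::finite) + ('p + 'p)) \<Rightarrow> real^'p^'m" where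
  "unB z = (\<chi> k j. z $ Inl (j, k))"
definition unM :: "real^(('p::finite \<times> 'm::finite) + ('p + 'p)) \<Rightarrow> real^'p" where
  "unM z = (\<chi> j. z $ Inr (Inl j))"
definition unS :: "real^(('p::finite \<times> 'm::finite) + ('p + 'p)) \<Rightarrow> real^'p" where
  "unS z = (\<chi> j. z $ Inr (Inr j))"

definition joint :: "real^'p::finite^'m::finite \<Rightarrow> real^'p \<Rightarrow> real^'p \<Rightarrow> real^(('p \<times> 'm) + ('p + 'p))" where
  "joint B mu s = (\<chi> a. case a of Inl (j, k) \<Rightarrow> B $ k $ j
                               | Inr (Inl j) \<Rightarrow> mu $ j | Inr (Inr j) \<Rightarrow> s $ j)"

definition elbo_joint :: "nat^'p::finite \<Rightarrow> real^'m \<Rightarrow> real^'p \<Rightarrow> real^'p^'p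
                          \<Rightarrow> real^(('p \<times> 'm) + ('p + 'p)) \<Rightarrow> real" where
  "elbo_joint Y x off Om z = elbo Y x off (unB z) Om (unM z) (unS z)"

definition hBB :: "real^('a::finite + 'b::finite)^('a + 'b) \<Rightarrow> real^'a^'a" where
  "hBB H = (\<chi> u v. H $ Inl u $ Inl v)"
definition hBP :: "real^('a::finite + 'b::finite)^('a + 'b) \<Rightarrow> real^'b^'a" where
  "hBP H = (\<chi> u v. H $ Inl u $ Inr v)"
definition hPB :: "real^('a::finite + 'b::finite)^('a + 'b) \<Rightarrow> real^'a^'b" where
  "hPB H = (\<chi> u v. H $ Inr u $ Inl v)"
definition hPP :: "real^('a::finite + 'b::finite)^('a + 'b) \<Rightarrow> real^'b^'b" where
  "hPP H = (\<chi> u v. H $ Inr u $ Inr v)"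

end

theory Submission
  imports Defs
begin

(* For s > 0 the ELBO is smooth in z = (vec B, m, s), and differentiating it twice shows that its
   Hessian is
     -(J^T D_a J + diag(0, C)),   C = diag(Omega, D_F),   F = a + diag Omega + 1/s^2,
   where a = atil and J = [I_p (x) x^T | I_p | D_s] is the Jacobian of log a with respect to z.
   With P = I_p (x) x^T and U = [I_p | D_s], the Schur complement of the variational block is
   -P^T (D_a - D_a U (C + U^T D_a U)^-1 U^T D_a) P, which by the Woodbury identity equals
   -P^T (D_a^-1 + U C^-1 U^T)^-1 P.  Finally U C^-1 U^T = Sigma + D_s^2 D_F^-1
   = Sigma + D_s^4 (I + D_s^2 (D_a + Omega_D))^-1 and P^T M P = M (x) x x^T.  All inverses exist
   because Omega, D_a and D_F are positive definite. *)

section \<open>Matrix inverses and the Woodbury identity\<close>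

lemma matrix_inv_right:
  fixes A :: "'a::field^'n^'n"
  assumes "invertible A"
  shows "A ** matrix_inv A = mat 1"
  using someI_ex[OF assms[unfolded invertible_def]] by (simp add: matrix_inv_def)

lemma matrix_inv_left:
  fixes A :: "'a::field^'n^'n"
  assumes "invertible A"
  shows "matrix_inv A ** A = mat 1"
  using someI_ex[OF assms[unfolded invertible_def]] by (simp add: matrix_inv_def)

lemma invertible_iff_right_inverse:
  fixes A :: "'a::field^'n^'n"
  shows "invertible A \<longleftrightarrow> (\<exists>X. A ** X = mat 1)"
  using invertible_def matrix_left_right_inverse by blast

lemma matrix_inv_unique:
  fixes A X :: "'a::field^'n^'n"
  assumes "A ** X = mat 1"
  shows "matrix_inv A = X"
proof -
  have inv: "invertible A"
    using assms invertible_iff_right_inverse by blast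
  have "matrix_inv A = matrix_inv A ** (A ** X)" by (simp add: assms)
  also have "\<dots> = X" by (simp add: matrix_mul_assoc matrix_inv_left[OF inv])
  finally show ?thesis .
qed

lemma invertible_matrix_inv:
  fixes A :: "'a::field^'n^'n"
  assumes "invertible A"
  shows "invertible (matrix_inv A)" and "matrix_inv (matrix_inv A) = A"
  using matrix_inv_left[OF assms] by (auto simp: invertible_iff_right_inverse intro: matrix_inv_unique)

lemma matrix_mul_uminus_left: "(- A) ** B = - (A ** (B :: 'a::ring_1^_^_))"
  by (simp add: vec_eq_iff matrix_matrix_mult_def sum_negf)

lemma matrix_mul_uminus_right: "A ** (- B) = - (A ** (B :: 'a::ring_1^_^_))"
  by (simp add: vec_eq_iff matrix_matrix_mult_def sum_negf)

lemma matrix_add_rdistrib: "(A + B) ** C = A ** C + B ** (C :: 'a::semiring_1^_^_)"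
  by (simp add: vec_eq_iff matrix_matrix_mult_def sum.distrib distrib_right)

lemma matrix_diff_rdistrib: "(A - B) ** C = A ** C - B ** (C :: 'a::ring_1^_^_)"
  by (simp add: vec_eq_iff matrix_matrix_mult_def sum_subtractf left_diff_distrib)

lemma matrix_diff_ldistrib: "A ** (B - C) = A ** B - A ** (C :: 'a::ring_1^_^_)"
  by (simp add: vec_eq_iff matrix_matrix_mult_def sum_subtractf right_diff_distrib)

lemma matrix_inv_uminus:
  fixes A :: "'a::field^'n^'n"
  assumes "invertible A"
  shows "matrix_inv (- A) = - matrix_inv A"
  by (rule matrix_inv_unique)
    (simp add: matrix_mul_uminus_left matrix_mul_uminus_right matrix_inv_right[OF assms])

lemma woodbury_identity:
  fixes A :: "'a::field^'n^'n" and C :: "'a^'q^'q" and U :: "'a^'q^'n" and V :: "'a^'n^'q"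
  assumes A: "invertible A" and C: "invertible C"
    and K: "invertible (matrix_inv C + V ** matrix_inv A ** U)"
  shows "matrix_inv (A + U ** C ** V)
    = matrix_inv A - matrix_inv A ** U ** matrix_inv (matrix_inv C + V ** matrix_inv A ** U) ** V ** matrix_inv A"
proof (rule matrix_inv_unique)
  let ?Ai = "matrix_inv A" and ?Ci = "matrix_inv C"
  let ?K = "?Ci + V ** ?Ai ** U"
  let ?Ki = "matrix_inv ?K"
  have cancel_A: "X ** A ** ?Ai = X" and cancel_C: "Y ** C ** ?Ci = Y" and cancel_K: "Y ** ?K ** ?Ki = Y"
    for X :: "'a^'n^'n" and Y :: "'a^'q^'n"
    by (metis matrix_inv_right[OF A] matrix_mul_assoc matrix_mul_rid,
        metis matrix_inv_right[OF C] matrix_mul_assoc matrix_mul_rid,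
        metis matrix_inv_right[OF K] matrix_mul_assoc matrix_mul_rid)
  have "U ** ?Ki + U ** C ** V ** ?Ai ** U ** ?Ki = U ** C"
    using cancel_K[of "U ** C"] by (simp add: matrix_add_ldistrib matrix_add_rdistrib matrix_mul_assoc cancel_C)
  then have key: "U ** C ** V ** ?Ai ** U ** ?Ki = U ** C - U ** ?Ki"
    by (simp add: algebra_simps)
  show "(A + U ** C ** V) ** (?Ai - ?Ai ** U ** ?Ki ** V ** ?Ai) = mat 1"
    by (simp add: matrix_add_rdistrib matrix_diff_ldistrib matrix_diff_rdistrib matrix_mul_assoc
        matrix_inv_right[OF A] cancel_A key)
qed

lemma schur_complement_woodbury:
  fixes D :: "'a::field^'n^'n" and C :: "'a^'q^'q" and P :: "'a^'m^'n" and U :: "'a^'q^'n"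
  assumes D: "invertible D" and C: "invertible C" and N: "invertible (C + transpose U ** D ** U)"
  shows "- (transpose P ** D ** P)
           - (- (transpose P ** D ** U)) ** matrix_inv (- (C + transpose U ** D ** U)) ** (- (transpose U ** D ** P))
         = - (transpose P ** matrix_inv (matrix_inv D + U ** matrix_inv C ** transpose U) ** P)"
proof -
  have "matrix_inv (matrix_inv D + U ** matrix_inv C ** transpose U)
      = D - D ** U ** matrix_inv (C + transpose U ** D ** U) ** transpose U ** D"
    using woodbury_identity[of "matrix_inv D" "matrix_inv C" "transpose U" U] N
    by (simp add: invertible_matrix_inv D C)
  then show ?thesis
    unfolding matrix_inv_uminus[OF N]
    by (simp add: matrix_mul_uminus_left matrix_mul_uminus_right
        matrix_diff_ldistrib matrix_diff_rdistrib matrix_mul_assoc)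
qed

definition pos_definite :: "real^'n^'n \<Rightarrow> bool" where
  "pos_definite A \<longleftrightarrow> (\<forall>v. v \<noteq> 0 \<longrightarrow> 0 < v \<bullet> (A *v v))"

definition pos_semidefinite :: "real^'n^'n \<Rightarrow> bool" where
  "pos_semidefinite A \<longleftrightarrow> (\<forall>v. 0 \<le> v \<bullet> (A *v v))"

lemma pos_definite_imp_semidefinite: "pos_definite A \<Longrightarrow> pos_semidefinite A"
  unfolding pos_definite_def pos_semidefinite_def by (metis inner_zero_left order.refl less_imp_le)

lemma pos_definite_invertible:
  assumes "pos_definite A"
  shows "invertible A"
proof -
  have "\<forall>v. A *v v = 0 \<longrightarrow> v = 0"
    using assms unfolding pos_definite_def by (metis inner_zero_right less_irrefl)
  then show ?thesis
    by (simp add: invertible_left_inverse matrix_left_invertible_ker)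
qed

lemma pos_definite_diag_pos:
  assumes "pos_definite A"
  shows "0 < A $ j $ j"
  using assms[unfolded pos_definite_def, rule_format, of "axis j 1"]
  by (simp add: inner_axis' matrix_vector_mult_basis column_def)

lemma pos_definite_add_semidefinite:
  "pos_definite A \<Longrightarrow> pos_semidefinite B \<Longrightarrow> pos_definite (A + B)"
  unfolding pos_definite_def pos_semidefinite_def
  by (simp add: matrix_vector_mult_add_rdistrib inner_add_right add_pos_nonneg)

lemma pos_semidefinite_congruence:
  assumes "pos_semidefinite D"
  shows "pos_semidefinite (transpose U ** D ** U)"
proof -
  have "v \<bullet> ((transpose U ** D ** U) *v v) = (U *v v) \<bullet> (D *v (U *v v))" for v
  proof -
    have "v \<bullet> ((transpose U ** D ** U) *v v) = ((D *v (U *v v)) v* U) \<bullet> v"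
      by (simp add: matrix_vector_mul_assoc[symmetric] inner_commute)
    also have "\<dots> = (U *v v) \<bullet> (D *v (U *v v))"
      by (metis dot_lmul_matrix inner_commute)
    finally show ?thesis .
  qed
  then show ?thesis
    using assms by (simp add: pos_semidefinite_def)
qed

lemma Diag_mult_left: "Diag u ** A = (\<chi> i j. u $ i * A $ i $ j)"
  by (simp add: vec_eq_iff matrix_matrix_mult_def Diag_def if_distrib [of "\<lambda>x. x * _"] cong: if_cong)

lemma Diag_mult_right: "A ** Diag u = (\<chi> i j. A $ i $ j * u $ j)"
  by (simp add: vec_eq_iff matrix_matrix_mult_def Diag_def if_distrib [of "\<lambda>x. _ * x"] cong: if_cong)

lemma Diag_mult_vector: "Diag u *v w = u * w"
  by (simp add: vec_eq_iff matrix_vector_mult_def Diag_def if_distrib [of "\<lambda>x. x * _"] cong: if_cong)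

lemma Diag_mult_Diag: "Diag u ** Diag v = Diag (u * v)"
  unfolding Diag_mult_left by (simp add: vec_eq_iff Diag_def)

lemma transpose_Diag [simp]: "transpose (Diag u) = Diag u"
  by (simp add: vec_eq_iff transpose_def Diag_def)

lemma mat_1_eq_Diag: "mat 1 = Diag 1"
  by (simp add: vec_eq_iff mat_def Diag_def)

lemma diag_part_eq_Diag: "diag_part A = Diag (\<chi> j. A $ j $ j)"
  by (simp add: vec_eq_iff diag_part_def Diag_def)

lemma add_Diag: "Diag u + Diag v = Diag (u + v)"
  by (simp add: vec_eq_iff Diag_def)

lemma Diag_mult_Diag_inverse:
  assumes "\<And>j. u $ j \<noteq> 0"
  shows "Diag u ** Diag (\<chi> j. inverse (u $ j)) = mat 1"
proof -
  have "u * (\<chi> j. inverse (u $ j)) = 1" by (simp add: vec_eq_iff assms)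
  then show ?thesis by (simp add: Diag_mult_Diag mat_1_eq_Diag)
qed

lemma invertible_Diag: "(\<And>j. u $ j \<noteq> 0) \<Longrightarrow> invertible (Diag u)"
  using Diag_mult_Diag_inverse invertible_iff_right_inverse by blast

lemma matrix_inv_Diag: "(\<And>j. u $ j \<noteq> 0) \<Longrightarrow> matrix_inv (Diag u) = Diag (\<chi> j. inverse (u $ j))"
  by (rule matrix_inv_unique) (rule Diag_mult_Diag_inverse)

lemma pos_definite_Diag:
  fixes u :: "real^'n"
  assumes "\<And>j. 0 < u $ j"
  shows "pos_definite (Diag u)"
proof (unfold pos_definite_def, intro allI impI)
  fix v :: "real^'n" assume "v \<noteq> 0"
  then obtain i where "v $ i \<noteq> 0" by (auto simp: vec_eq_iff)
  then have "0 < u $ i * (v $ i)\<^sup>2" using assms by simp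
  also have "\<dots> \<le> (\<Sum>j\<in>UNIV. u $ j * (v $ j)\<^sup>2)"
    by (rule member_le_sum) (auto simp: assms less_imp_le)
  also have "\<dots> = v \<bullet> (Diag u *v v)"
    by (simp add: Diag_mult_vector inner_vec_def power2_eq_square mult_ac)
  finally show "0 < v \<bullet> (Diag u *v v)" .
qed

lemma transpose_mult_Diag_mult_nth:
  "(transpose P ** Diag a ** Q) $ u $ v = (\<Sum>j\<in>UNIV. a $ j * P $ j $ u * Q $ j $ v)"
  unfolding Diag_mult_right by (simp add: matrix_matrix_mult_def transpose_def mult_ac)

definition block_diag :: "'a::zero^'n^'n \<Rightarrow> 'a^'q^'q \<Rightarrow> 'a^('n + 'q)^('n + 'q)" where
  "block_diag A B = (\<chi> v w. case v of
       Inl i \<Rightarrow> (case w of Inl j \<Rightarrow> A $ i $ j | Inr j \<Rightarrow> 0)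
     | Inr i \<Rightarrow> (case w of Inl j \<Rightarrow> 0 | Inr j \<Rightarrow> B $ i $ j))"

definition hcat :: "'a^'n^'m \<Rightarrow> 'a^'q^'m \<Rightarrow> 'a^('n + 'q)^'m" where
  "hcat X Y = (\<chi> i v. case v of Inl j \<Rightarrow> X $ i $ j | Inr j \<Rightarrow> Y $ i $ j)"

lemma sum_UNIV_Plus:
  "sum f (UNIV :: ('n::finite + 'q::finite) set) = (\<Sum>i\<in>UNIV. f (Inl i)) + (\<Sum>i\<in>UNIV. f (Inr i))"
  using sum.Plus[of UNIV UNIV f] by (simp add: comp_def)

lemma block_diag_mult:
  "block_diag A B ** block_diag C D = block_diag (A ** C) (B ** (D :: 'a::semiring_1^_^_))"
  unfolding vec_eq_iff matrix_matrix_mult_def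
  by (simp only: vec_lambda_beta sum_UNIV_Plus) (simp add: block_diag_def split: sum.split)

lemma block_diag_mat_1: "block_diag (mat 1) (mat 1) = (mat 1 :: 'a::zero_neq_one^_^_)"
  unfolding vec_eq_iff by (simp add: mat_def block_diag_def split: sum.split)

lemma matrix_inv_block_diag:
  fixes A :: "'a::field^'n^'n" and B :: "'a^'q^'q"
  assumes "invertible A" "invertible B"
  shows "matrix_inv (block_diag A B) = block_diag (matrix_inv A) (matrix_inv B)"
  by (rule matrix_inv_unique) (simp add: block_diag_mult matrix_inv_right assms block_diag_mat_1)

lemma quadratic_form_block_diag:
  "v \<bullet> (block_diag A B *v v)
     = (\<chi> i. v $ Inl i) \<bullet> (A *v (\<chi> i. v $ Inl i)) + (\<chi> i. v $ Inr i) \<bullet> (B *v (\<chi> i. v $ Inr i))"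
  unfolding inner_vec_def matrix_vector_mult_def
  by (simp only: vec_lambda_beta sum_UNIV_Plus) (simp add: block_diag_def)

lemma pos_definite_block_diag:
  fixes A :: "real^'n^'n" and B :: "real^'q^'q"
  assumes A: "pos_definite A" and B: "pos_definite B"
  shows "pos_definite (block_diag A B)"
proof (unfold pos_definite_def, intro allI impI)
  fix v :: "real^('n + 'q)" assume "v \<noteq> 0"
  then have "(\<chi> i. v $ Inl i) \<noteq> 0 \<or> (\<chi> i. v $ Inr i) \<noteq> 0"
    by (metis (mono_tags) sum.exhaust vec_eq_iff vec_lambda_beta zero_index)
  then show "0 < v \<bullet> (block_diag A B *v v)"
    using A B pos_definite_imp_semidefinite[OF A] pos_definite_imp_semidefinite[OF B]
    unfolding quadratic_form_block_diag pos_definite_def pos_semidefinite_def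
    by (meson add_pos_nonneg add_nonneg_pos)
qed

lemma hcat_mult_block_diag: "hcat X Y ** block_diag A B = hcat (X ** A) (Y ** (B :: 'a::semiring_1^_^_))"
  unfolding vec_eq_iff matrix_matrix_mult_def
  by (simp only: vec_lambda_beta sum_UNIV_Plus) (simp add: block_diag_def hcat_def split: sum.split)

lemma hcat_mult_transpose_hcat:
  "hcat X Y ** transpose (hcat X' Y') = X ** transpose X' + Y ** transpose (Y' :: 'a::semiring_1^_^_)"
  unfolding vec_eq_iff matrix_matrix_mult_def
  by (simp only: vec_lambda_beta sum_UNIV_Plus) (simp add: hcat_def transpose_def)

lemma blocks_gram_plus_block_diag:
  fixes P :: "real^'b^'n" and U :: "real^'q^'n" and D :: "real^'n^'n" and A :: "real^'b^'b" and C :: "real^'q^'q"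
  defines "H \<equiv> - (transpose (hcat P U) ** D ** hcat P U + block_diag A C)"
  shows "hBB H = - (transpose P ** D ** P + A)" and "hBP H = - (transpose P ** D ** U)"
    and "hPB H = - (transpose U ** D ** P)" and "hPP H = - (C + transpose U ** D ** U)"
  unfolding H_def
  by (simp_all add: vec_eq_iff hBB_def hBP_def hPB_def hPP_def matrix_matrix_mult_def transpose_def
      hcat_def block_diag_def)

(* I_p (x) x^T, the Jacobian of the linear predictor B^T x with respect to vec B. *)
definition eye_kron_row :: "real^'m \<Rightarrow> real^('p \<times> 'm)^'p" where
  "eye_kron_row x = (\<chi> j u. if fst u = j then x $ snd u else 0)"

lemma transpose_eye_kron_row_mult:
  "transpose (eye_kron_row x) ** M ** eye_kron_row x = kron M (\<chi> k l. x $ k * x $ l)"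
  unfolding vec_eq_iff matrix_matrix_mult_def
  by (simp add: kron_def transpose_def eye_kron_row_def if_distrib [of "\<lambda>y. _ * y"]
      if_distrib [of "\<lambda>y. y * _"] sum_distrib_right mult_ac cong: if_cong)

section \<open>The Hessian of the ELBO\<close>

definition log_atil_deriv :: "real^'m::finite \<Rightarrow> real^(('p::finite \<times> 'm) + ('p + 'p))
                               \<Rightarrow> real^(('p \<times> 'm) + ('p + 'p)) \<Rightarrow> real^'p" where
  "log_atil_deriv x z d = (\<chi> j. (\<Sum>k\<in>UNIV. x $ k * unB d $ k $ j) + unM d $ j + unS z $ j * unS d $ j)"

definition elbo_deriv :: "nat^'p::finite \<Rightarrow> real^'m::finite \<Rightarrow> real^'p \<Rightarrow> real^'p^'p
    \<Rightarrow> real^(('p \<times> 'm) + ('p + 'p)) \<Rightarrow> real^(('p \<times> 'm) + ('p + 'p)) \<Rightarrow> real" where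
  "elbo_deriv Y x off Om z d =
       (\<Sum>j\<in>UNIV. real (Y $ j) * (unM d $ j + (\<Sum>k\<in>UNIV. x $ k * unB d $ k $ j)))
     - (\<Sum>j\<in>UNIV. atil x off (unB z) (unM z) (unS z) $ j * log_atil_deriv x z d $ j)
     - (unM d \<bullet> (Om *v unM z) + unM z \<bullet> (Om *v unM d)) / 2
     - (\<Sum>j\<in>UNIV. Om $ j $ j * unS z $ j * unS d $ j)
     + (\<Sum>j\<in>UNIV. unS d $ j / unS z $ j)"

definition elbo_deriv2 :: "real^'m::finite \<Rightarrow> real^'p::finite \<Rightarrow> real^'p^'p \<Rightarrow> real^(('p \<times> 'm) + ('p + 'p))
    \<Rightarrow> real^(('p \<times> 'm) + ('p + 'p)) \<Rightarrow> real^(('p \<times> 'm) + ('p + 'p)) \<Rightarrow> real" where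
  "elbo_deriv2 x off Om z d' d =
     - (\<Sum>j\<in>UNIV. atil x off (unB z) (unM z) (unS z) $ j * log_atil_deriv x z d' $ j * log_atil_deriv x z d $ j)
     - (\<Sum>j\<in>UNIV. atil x off (unB z) (unM z) (unS z) $ j * unS d' $ j * unS d $ j)
     - (unM d' \<bullet> (Om *v unM d) + unM d \<bullet> (Om *v unM d')) / 2
     - (\<Sum>j\<in>UNIV. Om $ j $ j * unS d' $ j * unS d $ j)
     - (\<Sum>j\<in>UNIV. unS d' $ j * unS d $ j / (unS z $ j)\<^sup>2)"

lemma unB_add_scaleR: "unB (z + t *\<^sub>R d) = unB z + t *\<^sub>R unB d"
  by (simp add: unB_def vec_eq_iff)

lemma unM_add_scaleR: "unM (z + t *\<^sub>R d) = unM z + t *\<^sub>R unM d"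
  by (simp add: unM_def vec_eq_iff)

lemma unS_add_scaleR: "unS (z + t *\<^sub>R d) = unS z + t *\<^sub>R unS d"
  by (simp add: unS_def vec_eq_iff)

lemma has_real_derivative_elbo_joint:
  assumes "\<And>j. 0 < unS z $ j"
  shows "((\<lambda>t. elbo_joint Y x off Om (z + t *\<^sub>R d)) has_real_derivative elbo_deriv Y x off Om z d) (at 0)"
  unfolding elbo_joint_def elbo_def atil_def unB_add_scaleR unM_add_scaleR unS_add_scaleR
    matrix_vector_right_distrib inner_add_left inner_add_right matrix_vector_mult_scaleR
    inner_scaleR_left inner_scaleR_right
  apply (simp only: vector_add_component vector_scaleR_component real_scaleR_def)
  apply (rule derivative_eq_intros refl | simp add: assms)+
  apply (simp add: elbo_deriv_def log_atil_deriv_def atil_def mult_ac sum_divide_distrib)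
  done

lemma has_real_derivative_elbo_deriv:
  assumes "\<And>j. 0 < unS z $ j"
  shows "((\<lambda>t. elbo_deriv Y x off Om (z + t *\<^sub>R d') d) has_real_derivative elbo_deriv2 x off Om z d' d) (at 0)"
  unfolding elbo_deriv_def log_atil_deriv_def atil_def unB_add_scaleR unM_add_scaleR unS_add_scaleR
    matrix_vector_right_distrib inner_add_left inner_add_right matrix_vector_mult_scaleR
    inner_scaleR_left inner_scaleR_right
  apply (simp only: vector_add_component vector_scaleR_component real_scaleR_def vec_lambda_beta)
  apply (rule derivative_eq_intros refl | simp add: assms less_imp_neq[OF assms, symmetric])+
  apply (simp add: elbo_deriv2_def log_atil_deriv_def atil_def mult_ac sum_divide_distrib
      sum.distrib sum_negf power2_eq_square)
  done

lemma partial_elbo_joint: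
  assumes "\<And>j. 0 < unS z $ j"
  shows "partial (elbo_joint Y x off Om) c z = elbo_deriv Y x off Om z (axis c 1)"
  unfolding partial_def by (rule DERIV_imp_deriv[OF has_real_derivative_elbo_joint[OF assms]])

lemma hessian_elbo_joint_nth:
  assumes pos: "\<And>j. 0 < unS z $ j"
  shows "hessian (elbo_joint Y x off Om) z $ c $ c' = elbo_deriv2 x off Om z (axis c 1) (axis c' 1)"
proof -
  let ?z = "\<lambda>t. z + t *\<^sub>R axis c 1"
  have "\<forall>\<^sub>F t in at 0. \<forall>j. 0 < unS (?z t) $ j"
  proof (rule eventually_all_finite)
    fix j
    have "((\<lambda>t. unS (?z t) $ j) \<longlongrightarrow> unS z $ j) (at 0)"
      unfolding unS_add_scaleR by (auto intro!: tendsto_eq_intros)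
    then show "\<forall>\<^sub>F t in at 0. 0 < unS (?z t) $ j" using pos by (rule order_tendstoD(1))
  qed
  then have ev: "\<forall>\<^sub>F t in at 0. elbo_deriv Y x off Om (?z t) (axis c' 1) = partial (elbo_joint Y x off Om) c' (?z t)"
    by eventually_elim (simp add: partial_elbo_joint)
  have at0: "elbo_deriv Y x off Om (?z 0) (axis c' 1) = partial (elbo_joint Y x off Om) c' (?z 0)"
    by (simp add: partial_elbo_joint pos)
  have "((\<lambda>t. partial (elbo_joint Y x off Om) c' (?z t))
      has_real_derivative elbo_deriv2 x off Om z (axis c 1) (axis c' 1)) (at 0)"
    by (rule has_field_derivative_cong_eventually[THEN iffD1, OF ev at0 has_real_derivative_elbo_deriv[OF pos]])
  then show ?thesis
    unfolding hessian_def partial_def[of "partial _ _"] by (simp add: DERIV_imp_deriv)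
qed

definition log_atil_jacobian :: "real^'m \<Rightarrow> real^'p \<Rightarrow> real^(('p \<times> 'm) + ('p + 'p))^'p" where
  "log_atil_jacobian x s = hcat (eye_kron_row x) (hcat (mat 1) (Diag s))"

lemma axis_nth_if: "axis i x $ j = (if j = i then x else 0)"
  by (simp add: axis_def)

lemma unB_axis: "unB (axis c 1) $ k $ j = (if c = Inl (j, k) then 1 else 0)"
  by (auto simp: unB_def axis_def)

lemma unM_axis: "unM (axis c 1) = (case c of Inr (Inl i) \<Rightarrow> axis i 1 | _ \<Rightarrow> 0)"
  by (auto simp: unM_def axis_def vec_eq_iff split: sum.split)

lemma unS_axis: "unS (axis c 1) = (case c of Inr (Inr i) \<Rightarrow> axis i 1 | _ \<Rightarrow> 0)"
  by (auto simp: unS_def axis_def vec_eq_iff split: sum.split)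

lemma joint_index_cases:
  obtains (B) j k where "c = Inl (j, k)" | (M) i where "c = Inr (Inl i)" | (S) i where "c = Inr (Inr i)"
  by (metis prod.exhaust sum.exhaust)

lemma log_atil_deriv_axis:
  "log_atil_deriv x z (axis c 1) = column c (log_atil_jacobian x (unS z))"
  by (cases c rule: joint_index_cases)
    (auto simp: vec_eq_iff log_atil_deriv_def log_atil_jacobian_def hcat_def eye_kron_row_def
       column_def unB_axis unM_axis unS_axis mat_def Diag_def axis_nth_if
       if_distrib [of "\<lambda>y. _ * y"] cong: if_cong)

definition variational_curvature :: "real^'p^'p \<Rightarrow> real^'p \<Rightarrow> real^'p \<Rightarrow> real^('p + 'p)^('p + 'p)" where
  "variational_curvature Om a s = block_diag Om (Diag (\<chi> j. a $ j + Om $ j $ j + 1 / (s $ j)\<^sup>2))"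

lemma elbo_deriv2_axis:
  assumes sym: "transpose Om = Om"
  shows "elbo_deriv2 x off Om z (axis c 1) (axis c' 1)
    = - (transpose (log_atil_jacobian x (unS z)) ** Diag (atil x off (unB z) (unM z) (unS z))
            ** log_atil_jacobian x (unS z)
         + block_diag 0 (variational_curvature Om (atil x off (unB z) (unM z) (unS z)) (unS z))) $ c $ c'"
proof -
  have Om_sym: "Om $ j $ i = Om $ i $ j" for i j
    using arg_cong[OF sym, of "\<lambda>M. M $ i $ j"] by (simp add: transpose_def)
  show ?thesis
    unfolding elbo_deriv2_def log_atil_deriv_axis vector_uminus_component vector_add_component
      transpose_mult_Diag_mult_nth variational_curvature_def
    by (cases c rule: joint_index_cases; cases c' rule: joint_index_cases)
      (simp_all add: column_def unM_axis unS_axis block_diag_def Diag_def inner_axis' matrix_vector_mult_basis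
        Om_sym algebra_simps axis_nth_if mult_if_delta if_distrib [of "\<lambda>y. _ * y"]
        if_distrib [of "\<lambda>y. y / _"] cong: if_cong)
qed

lemma unB_joint [simp]: "unB (joint B mu s) = B"
  by (simp add: unB_def joint_def vec_eq_iff)

lemma unM_joint [simp]: "unM (joint B mu s) = mu"
  by (simp add: unM_def joint_def vec_eq_iff)

lemma unS_joint [simp]: "unS (joint B mu s) = s"
  by (simp add: unS_def joint_def vec_eq_iff)

lemma hessian_elbo_joint:
  assumes "transpose Om = Om" and "\<And>j. 0 < s $ j"
  shows "hessian (elbo_joint Y x off Om) (joint B mu s)
    = - (transpose (log_atil_jacobian x s) ** Diag (atil x off B mu s) ** log_atil_jacobian x s
         + block_diag 0 (variational_curvature Om (atil x off B mu s) s))"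
  using hessian_elbo_joint_nth[of "joint B mu s"] elbo_deriv2_axis[OF assms(1), of x off "joint B mu s"] assms(2)
  by (simp add: vec_eq_iff)

section \<open>The Schur complement\<close>

lemma pos_definite_variational_curvature:
  assumes "pos_definite Om" and "\<And>j. 0 < a $ j"
  shows "pos_definite (variational_curvature Om a s)"
proof -
  have "0 < (\<chi> j. a $ j + Om $ j $ j + 1 / (s $ j)\<^sup>2) $ j" for j
    using assms(2)[of j] pos_definite_diag_pos[OF assms(1), of j] by (simp add: add_pos_pos add_pos_nonneg)
  then show ?thesis
    unfolding variational_curvature_def by (rule pos_definite_block_diag[OF assms(1) pos_definite_Diag])
qed

lemma power4_divide_eq:
  fixes t c :: real
  assumes "t \<noteq> 0"
  shows "t ^ 4 / (1 + t\<^sup>2 * c) = t\<^sup>2 / (c + 1 / t\<^sup>2)"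
proof -
  have "c + 1 / t\<^sup>2 = (1 + t\<^sup>2 * c) / t\<^sup>2" using assms by (simp add: field_simps)
  then show ?thesis by (simp add: power4_eq_xxxx power2_eq_square)
qed

lemma Diag_power4_mult_inv:
  fixes s d :: "real^'n"
  assumes "\<And>j. s $ j \<noteq> 0" and "\<And>j. 1 + (s $ j)\<^sup>2 * d $ j \<noteq> 0"
  shows "Diag (\<chi> j. (s $ j)^4) ** matrix_inv (mat 1 + Diag (\<chi> j. (s $ j)\<^sup>2) ** Diag d)
       = Diag (\<chi> j. (s $ j)\<^sup>2 / (d $ j + 1 / (s $ j)\<^sup>2))"
proof -
  have "mat 1 + Diag (\<chi> j. (s $ j)\<^sup>2) ** Diag d = Diag (\<chi> j. 1 + (s $ j)\<^sup>2 * d $ j)"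
    by (simp add: mat_1_eq_Diag Diag_mult_Diag add_Diag) (rule arg_cong[where f = Diag], simp add: vec_eq_iff)
  then show ?thesis
    using assms power4_divide_eq[of "s $ _" "d $ _"]
    by (simp add: matrix_inv_Diag Diag_mult_Diag) (rule arg_cong[where f = Diag], simp add: vec_eq_iff divide_inverse)
qed

lemma hcat_Diag_mult_inv_block_diag:
  fixes Om :: "real^'n^'n"
  assumes "invertible Om" and "\<And>j. F $ j \<noteq> 0"
  shows "hcat (mat 1) (Diag s) ** matrix_inv (block_diag Om (Diag F)) ** transpose (hcat (mat 1) (Diag s))
       = matrix_inv Om + Diag (\<chi> j. (s $ j)\<^sup>2 / F $ j)"
  using assms
  by (simp add: matrix_inv_block_diag invertible_Diag matrix_inv_Diag hcat_mult_block_diag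
      hcat_mult_transpose_hcat Diag_mult_Diag)
    (rule arg_cong[where f = Diag], simp add: vec_eq_iff divide_inverse power2_eq_square)

lemma hcat_Diag_mult_inv_variational_curvature:
  assumes "pos_definite Om" and "\<And>j. 0 < a $ j" and "\<And>j. 0 < s $ j"
  shows "hcat (mat 1) (Diag s) ** matrix_inv (variational_curvature Om a s) ** transpose (hcat (mat 1) (Diag s))
       = matrix_inv Om + Diag (\<chi> j. (s $ j)^4)
           ** matrix_inv (mat 1 + Diag (\<chi> j. (s $ j)\<^sup>2) ** (Diag a + diag_part Om))"
proof -
  have "0 < 1 + (s $ j)\<^sup>2 * (a $ j + Om $ j $ j)" and "0 < a $ j + Om $ j $ j + 1 / (s $ j)\<^sup>2" for j
    using assms(2)[of j] pos_definite_diag_pos[OF assms(1), of j]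
    by (simp_all add: add_pos_nonneg add_pos_pos)
  then show ?thesis
    using assms(1,3)
    by (simp add: variational_curvature_def hcat_Diag_mult_inv_block_diag pos_definite_invertible
        diag_part_eq_Diag add_Diag Diag_power4_mult_inv less_imp_neq[symmetric])
qed

theorem proposition10:
  fixes Y :: "nat^'p::finite" and x :: "real^'m::finite" and off :: "real^'p"
    and B :: "real^'p^'m" and Om :: "real^'p^'p" and mu s :: "real^'p"
  assumes "transpose Om = Om"
    and "\<And>v. v \<noteq> 0 \<Longrightarrow> v \<bullet> (Om *v v) > 0"
    and "\<And>j. s $ j > 0"
  shows
    "(let H = hessian (elbo_joint Y x off Om) (joint B mu s);
          Sigma = matrix_inv Om;
          a = atil x off B mu s
      in hBB H - hBP H ** matrix_inv (hPP H) ** hPB H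
         = - kron (matrix_inv (Sigma + matrix_inv (Diag a)
                    + Diag (\<chi> j. (s $ j)^4)
                      ** matrix_inv (mat 1 + Diag (\<chi> j. (s $ j)^2) ** (Diag a + diag_part Om))))
                  (\<chi> k l. x $ k * x $ l))"
proof -
  define a where "a = atil x off B mu s"
  define U where "U = hcat (mat 1) (Diag s)"
  define C where "C = variational_curvature Om a s"
  define H where "H = hessian (elbo_joint Y x off Om) (joint B mu s)"
  have Om: "pos_definite Om" using assms(2) by (simp add: pos_definite_def)
  have a_pos: "0 < a $ j" for j by (simp add: a_def atil_def)
  have C: "pos_definite C"
    unfolding C_def using Om a_pos by (rule pos_definite_variational_curvature)
  have invertible: "invertible (Diag a)" "invertible C" "invertible (C + transpose U ** Diag a ** U)"
    using a_pos C pos_semidefinite_congruence[OF pos_definite_imp_semidefinite[OF pos_definite_Diag]]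
    by (auto intro!: pos_definite_invertible pos_definite_add_semidefinite pos_definite_Diag)
  have "H = - (transpose (hcat (eye_kron_row x) U) ** Diag a ** hcat (eye_kron_row x) U + block_diag 0 C)"
    using hessian_elbo_joint[OF assms(1,3)] by (simp add: H_def a_def U_def C_def log_atil_jacobian_def)
  then have "hBB H - hBP H ** matrix_inv (hPP H) ** hPB H
      = - (transpose (eye_kron_row x) ** matrix_inv (matrix_inv (Diag a) + U ** matrix_inv C ** transpose U)
           ** eye_kron_row x)"
    using schur_complement_woodbury[OF invertible] by (simp only: blocks_gram_plus_block_diag add_0_right)
  also have "\<dots> = - kron (matrix_inv (matrix_inv (Diag a) + U ** matrix_inv C ** transpose U))
      (\<chi> k l. x $ k * x $ l)"
    by (simp only: transpose_eye_kron_row_mult)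
  moreover have "U ** matrix_inv C ** transpose U = matrix_inv Om + Diag (\<chi> j. (s $ j)^4)
      ** matrix_inv (mat 1 + Diag (\<chi> j. (s $ j)\<^sup>2) ** (Diag a + diag_part Om))"
    unfolding U_def C_def using Om a_pos assms(3) by (rule hcat_Diag_mult_inv_variational_curvature)
  ultimately show ?thesis
    unfolding Let_def H_def[symmetric] a_def[symmetric] by (simp add: add_ac)
qed

end
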